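(* Let $s$ and $d$ be positive integers with $s\leqslant d/2$. Then $$ \left(\frac12+\frac1{2^{s+1}}\right)2^d-o(2^d)\leqslant n(d-s,d)\leqslant \left(\frac12+\frac1{2^{s+1}}\right)2^d, $$ where $o(2^d)$ refers to $d\to\infty$ with $s$ fixed. Consequently, for every fixed positive integer $s$, $$ \lim_{d\to\infty}\frac{n(d-s,d)}{2^d}=\frac{2^s+1}{2^{s+1}}. $$
   Context: A box in $\mathbb{R}^d$ is an axis-parallel $d$-dimensional cuboid. For a positive integer $k\leqslant d$, two boxes in $\mathbb{R}^d$ are called $k$-neighborly if their intersection is a box of dimension at least $d-k$ and at most $d-1$. $n(k,d)$ denotes the maximum size of a family of pairwise $k$-neighborly boxes in $\mathbb{R}^d$. *)

theory Defs
  imports Complex_Main "HOL-Library.Landau_Symbols"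
begin

text \<open>Points of R^d are modelled as functions nat => real that vanish outside {..<d}.\<close>

definition box_set :: "nat \<Rightarrow> (nat \<Rightarrow> real) \<Rightarrow> (nat \<Rightarrow> real) \<Rightarrow> (nat \<Rightarrow> real) set" where
  "box_set d a b = {x. (\<forall>i<d. a i \<le> x i \<and> x i \<le> b i) \<and> (\<forall>i\<ge>d. x i = 0)}"

definition is_box_of_dim :: "nat \<Rightarrow> nat \<Rightarrow> (nat \<Rightarrow> real) set \<Rightarrow> bool" where
  "is_box_of_dim d m C \<longleftrightarrow> (\<exists>a b. (\<forall>i<d. a i \<le> b i) \<and> card {i. i < d \<and> a i < b i} = m
      \<and> C = box_set d a b)"

definition is_box :: "nat \<Rightarrow> (nat \<Rightarrow> real) set \<Rightarrow> bool" where
  "is_box d B \<longleftrightarrow> (\<exists>a b. (\<forall>i<d. a i < b i) \<and> B = box_set d a b)"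

definition neighborly :: "nat \<Rightarrow> nat \<Rightarrow> (nat \<Rightarrow> real) set \<Rightarrow> (nat \<Rightarrow> real) set \<Rightarrow> bool" where
  "neighborly k d B C \<longleftrightarrow> (\<exists>m. d - k \<le> m \<and> m \<le> d - 1 \<and> is_box_of_dim d m (B \<inter> C))"

definition neighborly_family :: "nat \<Rightarrow> nat \<Rightarrow> (nat \<Rightarrow> real) set set \<Rightarrow> bool" where
  "neighborly_family k d F \<longleftrightarrow> (\<forall>B\<in>F. is_box d B) \<and>
      (\<forall>B\<in>F. \<forall>C\<in>F. B \<noteq> C \<longrightarrow> neighborly k d B C)"

definition nkd :: "nat \<Rightarrow> nat \<Rightarrow> nat" where
  "nkd k d = Max {card F | F. finite F \<and> neighborly_family k d F}"

end

(* A box of a pairwise (d - s)-neighborly family is encoded by a word in {0, 1, *}^d: along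
   each axis all touching pairs of boxes touch at one common contact point, and the letter
   records whether the box ends (0) or starts (1) there.  Two boxes are then neighborly exactly
   when their words are opposite in between 1 and d - s positions.  The subcubes of {0, 1}^d
   matched by distinct words are disjoint, and the antipodes of the star-free words avoid the
   subcubes of the words with fewer than s stars; weighing these two packings against each
   other bounds the family by (1/2 + 1/2^(s+1)) 2^d.  Conversely, the 0/1 words with at most
   (d - s)/2 ones together with the words starred in the first s positions and having more
   than (d - s)/2 ones elsewhere are pairwise (d - s)-neighborly, and up to central binomial
   coefficients, which are O(2^n / sqrt n), they number (2^d + 2^(d-s)) / 2. *)

theory Submission
  imports Defs
begin

section \<open>Binomial coefficients\<close>

lemma central_binomial_Suc:
  "Suc k * (2 * Suc k choose Suc k) = 2 * (2 * k + 1) * (2 * k choose k)"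
proof -
  define A where "A = 2 * Suc k choose Suc k"
  define B where "B = Suc (2 * k) choose k"
  define C where "C = 2 * k choose k"
  have AB: "Suc k * A = 2 * Suc k * B"
    using Suc_times_binomial[of k "2 * k + 1"] unfolding A_def B_def by simp
  have BC: "B * Suc k = Suc (2 * k) * C"
    using Suc_times_binomial_eq[of "2 * k" k] central_binomial_odd[of "Suc (2 * k)"]
    unfolding B_def C_def by simp
  have "Suc k * (Suc k * A) = 2 * Suc k * (B * Suc k)"
    by (metis AB mult.commute mult.left_commute)
  also have "\<dots> = Suc k * (2 * (2 * k + 1) * C)"
    by (simp only: BC) simp
  finally show ?thesis
    unfolding A_def C_def by (simp only: mult_cancel1) simp
qed

lemma central_binomial_sq_bound: "(2 * k choose k)^2 * (2 * k + 1) \<le> 16 ^ k"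
proof (induction k)
  case 0
  then show ?case by simp
next
  case (Suc k)
  define c where "c = 2 * k choose k"
  define c' where "c' = 2 * Suc k choose Suc k"
  have "(Suc k)^2 * (c'^2 * (2 * Suc k + 1)) = (Suc k * c')^2 * (2 * k + 3)"
    by (simp only: power_mult_distrib mult.assoc) (simp add: algebra_simps)
  also have "\<dots> = 4 * c^2 * ((2 * k + 1) * (2 * k + 3)) * (2 * k + 1)"
    unfolding c'_def central_binomial_Suc c_def[symmetric] by (simp add: power2_eq_square algebra_simps)
  also have "\<dots> \<le> 4 * c^2 * (4 * (Suc k)^2) * (2 * k + 1)"
    by (intro mult_right_mono mult_left_mono) (auto simp: power2_eq_square algebra_simps)
  also have "\<dots> = (Suc k)^2 * (16 * (c^2 * (2 * k + 1)))"
    by (simp add: algebra_simps)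
  also have "\<dots> \<le> (Suc k)^2 * 16 ^ Suc k"
    using Suc.IH unfolding c_def by simp
  finally show ?case
    unfolding c'_def by (simp only: mult_le_cancel1) simp
qed

lemma binomial_sq_mult_le: "(n choose k)^2 * n \<le> 4 ^ n"
proof -
  have "(n choose k)^2 * n \<le> (n choose (n div 2))^2 * n"
    using binomial_maximum[of n k] by (intro mult_right_mono power_mono) auto
  also have "\<dots> \<le> 4 ^ n"
  proof (cases "even n")
    case True
    then obtain k where n: "n = 2 * k" by blast
    have "(n choose (n div 2))^2 * n \<le> (2 * k choose k)^2 * (2 * k + 1)"
      using n by simp
    also have "\<dots> \<le> 16 ^ k" by (rule central_binomial_sq_bound)
    finally show ?thesis using n by (simp add: power_mult)
  next
    case False
    then obtain k where n: "n = 2 * k + 1" using oddE by blast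
    have "(2 * k + 1 choose k) * Suc k = (2 * k + 1) * (2 * k choose k)"
      using Suc_times_binomial_eq[of "2 * k" k] central_binomial_odd[of "2 * k + 1"] by simp
    also have "\<dots> \<le> 2 * (2 * k choose k) * Suc k" by simp
    finally have "(2 * k + 1 choose k) \<le> 2 * (2 * k choose k)"
      by (simp only: mult_le_cancel2)
    then have "(n choose (n div 2))^2 * n \<le> (2 * (2 * k choose k))^2 * (2 * k + 1)"
      unfolding n by (intro mult_right_mono power_mono) simp_all
    also have "\<dots> = 4 * ((2 * k choose k)^2 * (2 * k + 1))"
      by (simp add: power_mult_distrib)
    also have "\<dots> \<le> 4 * 16 ^ k" using central_binomial_sq_bound[of k] by simp
    finally show ?thesis using n by (simp add: power_mult)
  qed
  finally show ?thesis .
qed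

lemma binomial_mult_sqrt_le: "real (n choose k) * sqrt (real n) \<le> 2 ^ n"
proof -
  have "real (n choose k) * sqrt (real n) = sqrt (real ((n choose k)^2 * n))"
    by (simp add: real_sqrt_mult)
  also have "\<dots> \<le> sqrt ((2 ^ n)^2)"
    using binomial_sq_mult_le[of n k]
    by (metis of_nat_le_iff of_nat_numeral of_nat_power power_mult_distrib real_sqrt_le_iff
        numeral_Bit0 power2_eq_square mult_2)
  finally show ?thesis by simp
qed

lemma central_binomial_terms_le:
  assumes "1 \<le> s" "2 * s \<le> d"
  shows "real s * real (d choose (d div 2)) + real ((d - s) choose ((d - s) div 2))
    \<le> real (s + 2) * 2 ^ d / sqrt (real d)"
proof -
  define q where "q = sqrt (real d)"
  define C where "C = real (d choose (d div 2))"
  define C' where "C' = real ((d - s) choose ((d - s) div 2))"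
  have q: "0 < q" unfolding q_def using assms by simp
  have "real d \<le> 4 * real (d - s)"
    using assms(2) by (simp add: of_nat_diff)
  then have "q \<le> sqrt (4 * real (d - s))"
    unfolding q_def by (rule real_sqrt_le_mono)
  also have "\<dots> = 2 * sqrt (real (d - s))"
    by (simp add: real_sqrt_mult)
  finally have "C' * q \<le> 2 * (C' * sqrt (real (d - s)))"
    unfolding C'_def by (simp add: mult_left_mono)
  also have "\<dots> \<le> 2 * 2 ^ (d - s)"
    unfolding C'_def using binomial_mult_sqrt_le by simp
  also have "\<dots> \<le> 2 * 2 ^ d"
    by simp
  finally have "(real s * C + C') * q \<le> real (s + 2) * 2 ^ d"
    using mult_left_mono[OF binomial_mult_sqrt_le[of d "d div 2"], of "real s"]
    unfolding C_def q_def by (simp add: algebra_simps)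
  then show ?thesis
    using q unfolding C_def C'_def q_def by (simp add: field_simps)
qed

lemma card_subsets_card_le_eq:
  assumes "finite A"
  shows "card {X. X \<subseteq> A \<and> card X \<le> m} = card {X. X \<subseteq> A \<and> card A - m \<le> card X}"
proof (rule bij_betw_same_card[of "\<lambda>X. A - X"], rule bij_betw_byWitness[where f' = "\<lambda>X. A - X"])
  have card_Diff: "card (A - X) = card A - card X" "card X \<le> card A" if "X \<subseteq> A" for X
    using that assms by (auto simp: card_Diff_subset finite_subset card_mono)
  show "(\<lambda>X. A - X) ` {X. X \<subseteq> A \<and> card X \<le> m} \<subseteq> {X. X \<subseteq> A \<and> card A - m \<le> card X}"
    using card_Diff by auto
  show "(\<lambda>X. A - X) ` {X. X \<subseteq> A \<and> card A - m \<le> card X} \<subseteq> {X. X \<subseteq> A \<and> card X \<le> m}"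
    using card_Diff by fastforce
qed auto

lemma two_power_le_card_subsets_le:
  assumes "finite A"
  shows "2 ^ card A \<le> 2 * card {X. X \<subseteq> A \<and> card X \<le> m} + (card A - Suc (2 * m)) * (card A choose (card A div 2))"
proof -
  let ?n = "card A"
  let ?L = "{X. X \<subseteq> A \<and> card X \<le> m}" and ?H = "{X. X \<subseteq> A \<and> ?n - m \<le> card X}"
  let ?M = "\<Union>k\<in>{m<..<?n - m}. {X. X \<subseteq> A \<and> card X = k}"
  have "Pow A = ?L \<union> ?H \<union> ?M"
  proof (intro equalityI subsetI)
    fix X assume "X \<in> Pow A"
    then show "X \<in> ?L \<union> ?H \<union> ?M"
      by (cases "card X \<le> m \<or> ?n - m \<le> card X") (auto intro!: UN_I[of "card X"])
  qed auto
  then have "2 ^ ?n = card (?L \<union> ?H \<union> ?M)"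
    using assms by (metis card_Pow)
  also have "\<dots> \<le> card ?L + card ?H + card ?M"
    by (meson card_Un_le add_mono le_trans order_refl)
  also have "card ?H = card ?L"
    by (rule card_subsets_card_le_eq[OF assms, symmetric])
  also have "card ?M \<le> (\<Sum>k\<in>{m<..<?n - m}. card {X. X \<subseteq> A \<and> card X = k})"
    by (rule card_UN_le) simp
  also have "\<dots> = (\<Sum>k\<in>{m<..<?n - m}. ?n choose k)"
    using n_subsets[OF assms] by simp
  also have "\<dots> \<le> (\<Sum>k\<in>{m<..<?n - m}. ?n choose (?n div 2))"
    by (intro sum_mono binomial_maximum)
  finally show ?thesis by (simp add: mult_2)
qed

lemma two_power_le_card_subsets_gt:
  assumes "finite A" "2 * m \<le> card A"
  shows "2 ^ card A \<le> 2 * card {X. X \<subseteq> A \<and> m < card X} + (card A choose m)"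
proof -
  let ?n = "card A"
  let ?L = "{X. X \<subseteq> A \<and> card X \<le> m}" and ?G = "{X. X \<subseteq> A \<and> m < card X}"
  have fin: "finite ?L" "finite ?G" "finite {X. X \<subseteq> A \<and> card X = m}"
    using assms(1) by (auto intro: finite_subset[of _ "Pow A"])
  have "Pow A = ?L \<union> ?G" by auto
  then have "2 ^ ?n = card (?L \<union> ?G)"
    using assms(1) by (metis card_Pow)
  also have "\<dots> = card ?L + card ?G"
    using fin by (intro card_Un_disjoint) auto
  also have "card ?L = card {X. X \<subseteq> A \<and> ?n - m \<le> card X}"
    by (rule card_subsets_card_le_eq[OF assms(1)])
  also have "\<dots> \<le> card (?G \<union> {X. X \<subseteq> A \<and> card X = m})"
    using assms(2) fin by (intro card_mono) auto
  also have "\<dots> \<le> card ?G + (?n choose m)"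
    using card_Un_le[of ?G "{X. X \<subseteq> A \<and> card X = m}"] n_subsets[OF assms(1), of m] by simp
  finally show ?thesis by simp
qed

lemma box_set_Int:
  "box_set d a b \<inter> box_set d a' b' = box_set d (\<lambda>i. max (a i) (a' i)) (\<lambda>i. min (b i) (b' i))"
  by (auto simp: box_set_def)

lemma box_set_eqD:
  assumes "\<forall>i<d. a i \<le> b i" "box_set d a b = box_set d a' b'" "i < d"
  shows "a i = a' i \<and> b i = b' i"
proof -
  have corners_in: "(\<lambda>j. if j < d then a j else 0) \<in> box_set d a' b'"
      "(\<lambda>j. if j < d then b j else 0) \<in> box_set d a' b'"
    using assms(1) assms(2)[symmetric] by (auto simp: box_set_def)
  then have "\<forall>j<d. a' j \<le> b' j" by (auto simp: box_set_def)
  then have "(\<lambda>j. if j < d then a' j else 0) \<in> box_set d a b"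
      "(\<lambda>j. if j < d then b' j else 0) \<in> box_set d a b"
    using assms(2) by (auto simp: box_set_def)
  with corners_in assms(3) show ?thesis
    by (force simp: box_set_def)
qed

lemma is_box_of_dim_box_set_iff:
  "is_box_of_dim d m (box_set d a b) \<longleftrightarrow> (\<forall>i<d. a i \<le> b i) \<and> card {i. i < d \<and> a i < b i} = m"
proof
  assume "is_box_of_dim d m (box_set d a b)"
  then obtain a' b' where le': "\<forall>i<d. a' i \<le> b' i" and m: "card {i. i < d \<and> a' i < b' i} = m"
    and eq: "box_set d a' b' = box_set d a b"
    unfolding is_box_of_dim_def by metis
  have "a' i = a i \<and> b' i = b i" if "i < d" for i
    using box_set_eqD[OF le' eq that] .
  then have "{i. i < d \<and> a' i < b' i} = {i. i < d \<and> a i < b i}" "\<forall>i<d. a i \<le> b i"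
    using le' by auto
  with m show "(\<forall>i<d. a i \<le> b i) \<and> card {i. i < d \<and> a i < b i} = m"
    by simp
qed (auto simp: is_box_of_dim_def)

lemma neighborly_box_set_iff:
  assumes "\<forall>i<d. a i < b i" "\<forall>i<d. a' i < b' i" "0 < d" "k \<le> d"
  shows "neighborly k d (box_set d a b) (box_set d a' b') \<longleftrightarrow>
    (\<forall>i<d. a' i \<le> b i \<and> a i \<le> b' i) \<and>
    {i. i < d \<and> (b i = a' i \<or> b' i = a i)} \<noteq> {} \<and> card {i. i < d \<and> (b i = a' i \<or> b' i = a i)} \<le> k"
    (is "_ \<longleftrightarrow> ?overlap \<and> ?T \<noteq> {} \<and> card ?T \<le> k")
proof (cases ?overlap)
  case True
  let ?open = "{i. i < d \<and> max (a i) (a' i) < min (b i) (b' i)}"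
  have "?open = {..<d} - ?T"
    using True assms(1,2) by (auto simp: max_def min_def)
  moreover have T: "?T \<subseteq> {..<d}" by auto
  ultimately have "card ?open = d - card ?T"
    by (simp add: card_Diff_subset finite_subset)
  moreover have "\<forall>i<d. max (a i) (a' i) \<le> min (b i) (b' i)"
    using True assms(1,2) by (auto intro: less_imp_le)
  ultimately have "neighborly k d (box_set d a b) (box_set d a' b') \<longleftrightarrow>
      d - k \<le> d - card ?T \<and> d - card ?T \<le> d - 1"
    unfolding neighborly_def box_set_Int is_box_of_dim_box_set_iff by auto
  also have "\<dots> \<longleftrightarrow> 0 < card ?T \<and> card ?T \<le> k"
    using card_mono[OF _ T] assms(3,4) by simp arith
  also have "\<dots> \<longleftrightarrow> ?T \<noteq> {} \<and> card ?T \<le> k"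
    by (simp only: card_gt_0_iff) simp
  finally show ?thesis using True by simp
next
  case False
  then show ?thesis
    unfolding neighborly_def box_set_Int is_box_of_dim_box_set_iff by auto
qed

section \<open>Words over \<open>{0, 1, *}\<close>\<close>

text \<open>A word over \<open>{0, 1, *}\<close> is a function \<open>nat \<Rightarrow> bool option\<close> with \<open>None\<close> for \<open>*\<close>; only
  its positions below \<open>d\<close> matter.  Vertices of the cube \<open>{0, 1}^d\<close> are subsets of \<open>{..<d}\<close>.\<close>

definition opposite_positions :: "nat \<Rightarrow> (nat \<Rightarrow> bool option) \<Rightarrow> (nat \<Rightarrow> bool option) \<Rightarrow> nat set" where
  "opposite_positions d u v = {i. i < d \<and> (\<exists>b. u i = Some b \<and> v i = Some (\<not> b))}"

definition neighborly_words :: "nat \<Rightarrow> nat \<Rightarrow> (nat \<Rightarrow> bool option) set \<Rightarrow> bool" where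
  "neighborly_words k d W \<longleftrightarrow> (\<forall>u\<in>W. \<forall>v\<in>W. u \<noteq> v \<longrightarrow>
      opposite_positions d u v \<noteq> {} \<and> card (opposite_positions d u v) \<le> k)"

definition stars :: "nat \<Rightarrow> (nat \<Rightarrow> bool option) \<Rightarrow> nat set" where
  "stars d w = {i. i < d \<and> w i = None}"

definition ones :: "nat \<Rightarrow> (nat \<Rightarrow> bool option) \<Rightarrow> nat set" where
  "ones d w = {i. i < d \<and> w i = Some True}"

definition vertices :: "nat \<Rightarrow> (nat \<Rightarrow> bool option) \<Rightarrow> nat set set" where
  "vertices d w = {X. X \<subseteq> {..<d} \<and> (\<forall>i<d. \<forall>b. w i = Some b \<longrightarrow> (i \<in> X \<longleftrightarrow> b))}"

lemma opposite_positions_commute: "opposite_positions d u v = opposite_positions d v u"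
proof -
  have "(\<exists>b. u i = Some b \<and> v i = Some (\<not> b)) \<longleftrightarrow> (\<exists>b. v i = Some b \<and> u i = Some (\<not> b))" for i
    by (cases "u i"; cases "v i") auto
  then show ?thesis unfolding opposite_positions_def by blast
qed

lemma opposite_positions_self [simp]: "opposite_positions d u u = {}"
  unfolding opposite_positions_def by auto

lemma finite_opposite_positions [simp]: "finite (opposite_positions d u v)"
  unfolding opposite_positions_def by simp

lemma vertices_subset_Pow: "vertices d w \<subseteq> Pow {..<d}"
  unfolding vertices_def by auto

lemma finite_vertices [simp]: "finite (vertices d w)"
  using vertices_subset_Pow by (rule finite_subset) simp

lemma card_vertices: "card (vertices d w) = 2 ^ card (stars d w)"
proof -
  have image: "vertices d w = (\<lambda>Z. ones d w \<union> Z) ` Pow (stars d w)"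
  proof (intro equalityI subsetI)
    fix X assume X: "X \<in> vertices d w"
    have "X - ones d w \<subseteq> stars d w"
    proof
      fix i assume i: "i \<in> X - ones d w"
      with X have "i < d" "\<forall>b. w i = Some b \<longrightarrow> b" "w i \<noteq> Some True"
        unfolding vertices_def ones_def by auto
      then show "i \<in> stars d w" unfolding stars_def by (cases "w i") auto
    qed
    moreover have "ones d w \<subseteq> X" using X unfolding vertices_def ones_def by auto
    ultimately show "X \<in> (\<lambda>Z. ones d w \<union> Z) ` Pow (stars d w)"
      by (intro image_eqI[of _ _ "X - ones d w"]) auto
  next
    fix X assume "X \<in> (\<lambda>Z. ones d w \<union> Z) ` Pow (stars d w)"
    then obtain Z where "Z \<subseteq> stars d w" "X = ones d w \<union> Z" by blast
    then show "X \<in> vertices d w"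
      unfolding vertices_def ones_def stars_def by force
  qed
  have "ones d w \<inter> stars d w = {}"
    unfolding ones_def stars_def by auto
  then have "inj_on (\<lambda>Z. ones d w \<union> Z) (Pow (stars d w))"
    unfolding inj_on_def by blast
  then have "card (vertices d w) = card (Pow (stars d w))"
    unfolding image by (rule card_image)
  also have "\<dots> = 2 ^ card (stars d w)"
    by (simp add: card_Pow stars_def)
  finally show ?thesis .
qed

lemma vertices_disjoint:
  "opposite_positions d u v \<noteq> {} \<Longrightarrow> vertices d u \<inter> vertices d v = {}"
  unfolding opposite_positions_def vertices_def by fastforce

lemma vertices_no_stars:
  assumes "stars d w = {}"
  shows "vertices d w = {ones d w}"
proof -
  have some: "\<exists>b. w i = Some b" if "i < d" for i
    using assms that unfolding stars_def by auto
  then have "X = ones d w" if X: "X \<in> vertices d w" for X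
  proof (intro set_eqI)
    fix i
    show "i \<in> X \<longleftrightarrow> i \<in> ones d w"
    proof (cases "i < d")
      case True
      then obtain b where "w i = Some b" using some by blast
      with X True show ?thesis unfolding vertices_def ones_def by auto
    qed (use X in \<open>auto simp: vertices_def ones_def\<close>)
  qed
  moreover have "ones d w \<in> vertices d w"
    unfolding vertices_def ones_def by auto
  ultimately show ?thesis by blast
qed

lemma card_opposite_positions_ge_if_antipode:
  assumes "stars d u = {}" "{..<d} - ones d u \<in> vertices d v"
  shows "d - card (stars d v) \<le> card (opposite_positions d u v)"
proof -
  have "{..<d} - stars d v \<subseteq> opposite_positions d u v"
  proof
    fix i assume i: "i \<in> {..<d} - stars d v"
    then obtain b c where "u i = Some b" "v i = Some c"
      using assms(1) unfolding stars_def by auto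
    moreover have "i \<in> {..<d} - ones d u \<longleftrightarrow> c"
      using assms(2) i \<open>v i = Some c\<close> unfolding vertices_def by auto
    ultimately show "i \<in> opposite_positions d u v"
      using i unfolding ones_def opposite_positions_def by auto
  qed
  then have "card ({..<d} - stars d v) \<le> card (opposite_positions d u v)"
    by (intro card_mono) simp_all
  moreover have "stars d v \<subseteq> {..<d}" unfolding stars_def by auto
  ultimately show ?thesis
    by (simp add: card_Diff_subset finite_subset)
qed

lemma sum_card_vertices_le:
  assumes "finite W" "neighborly_words k d W"
  shows "(\<Sum>w\<in>W. card (vertices d w)) \<le> 2 ^ d"
proof -
  have "(\<Sum>w\<in>W. card (vertices d w)) = card (\<Union>w\<in>W. vertices d w)"
    using assms vertices_disjoint vertices_subset_Pow
    by (intro card_UN_disjoint[symmetric]) (auto simp: neighborly_words_def)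
  also have "\<dots> \<le> card (Pow {..<d})"
    using vertices_subset_Pow by (intro card_mono) auto
  finally show ?thesis by (simp add: card_Pow)
qed

lemma neighborly_words_card_le_two_power:
  assumes "finite W" "neighborly_words k d W"
  shows "card W \<le> 2 ^ d"
proof -
  have "card W = (\<Sum>w\<in>W. 1)" by simp
  also have "\<dots> \<le> (\<Sum>w\<in>W. card (vertices d w))"
    by (intro sum_mono) (simp add: card_vertices)
  also have "\<dots> \<le> 2 ^ d"
    by (rule sum_card_vertices_le[OF assms])
  finally show ?thesis .
qed

lemma antipode_notin_vertices:
  assumes "neighborly_words (d - s) d W" "s \<le> d" "u \<in> W" "v \<in> W"
    and "stars d u = {}" "card (stars d v) < s"
  shows "{..<d} - ones d u \<notin> vertices d v"
proof
  assume "{..<d} - ones d u \<in> vertices d v"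
  with assms(5) have le: "d - card (stars d v) \<le> card (opposite_positions d u v)"
    by (rule card_opposite_positions_ge_if_antipode)
  show False
  proof (cases "u = v")
    case True
    then show False using le assms(2,5,6) by simp
  next
    case False
    then show False using le assms unfolding neighborly_words_def by fastforce
  qed
qed

lemma card_no_stars_add_sum_card_vertices_le:
  assumes "finite W" "neighborly_words (d - s) d W" "s \<le> d"
  shows "card {u\<in>W. stars d u = {}} + (\<Sum>w\<in>{w\<in>W. card (stars d w) < s}. card (vertices d w)) \<le> 2 ^ d"
    (is "card ?A + (\<Sum>w\<in>?G. _) \<le> _")
proof -
  let ?antipode = "\<lambda>u. {..<d} - ones d u"
  have "inj_on ?antipode ?A"
  proof (rule inj_onI)
    fix u v assume uv: "u \<in> ?A" "v \<in> ?A" "?antipode u = ?antipode v"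
    then have "ones d u = ones d v" unfolding ones_def by auto
    then have "vertices d u \<inter> vertices d v \<noteq> {}"
      using uv by (simp add: vertices_no_stars)
    with uv assms(2) show "u = v"
      unfolding neighborly_words_def using vertices_disjoint by blast
  qed
  moreover have "?antipode ` ?A \<inter> (\<Union>w\<in>?G. vertices d w) = {}"
    using antipode_notin_vertices[OF assms(2,3)] by blast
  moreover have "finite (\<Union>w\<in>?G. vertices d w)" "finite ?A"
    using assms(1) vertices_subset_Pow by (auto intro: finite_subset)
  ultimately have "card ?A + (\<Sum>w\<in>?G. card (vertices d w)) = card (?antipode ` ?A \<union> (\<Union>w\<in>?G. vertices d w))"
    using assms vertices_disjoint vertices_subset_Pow
    by (subst card_Un_disjoint card_UN_disjoint; auto simp: card_image neighborly_words_def intro: finite_subset)+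
  also have "\<dots> \<le> card (Pow {..<d})"
    using vertices_subset_Pow by (intro card_mono) auto
  finally show ?thesis by (simp add: card_Pow)
qed

lemma charging_bound:
  fixes c s :: nat
  shows "2 * 2 ^ s \<le> ((2::nat) ^ s - 1) * ((if c = 0 then 1 else 0) + (if c < s then 2 ^ c else 0)) + 2 * 2 ^ c"
proof -
  define t :: nat where "t = 2 ^ s - 1"
  have t: "2 ^ s = t + 1" unfolding t_def by simp
  consider "c = 0" | "0 < c" "c < s" | "0 < c" "s \<le> c" by linarith
  then show ?thesis
  proof cases
    case 1
    have "s = 0 \<Longrightarrow> t = 0" unfolding t_def by simp
    with 1 show ?thesis unfolding t_def[symmetric] t by (cases "s = 0") simp_all
  next
    case 2
    then have "2 ^ 1 \<le> (2::nat) ^ c" by (intro power_increasing) auto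
    then have "t * 2 + 2 * 2 \<le> t * 2 ^ c + 2 * 2 ^ c"
      by (intro add_mono mult_left_mono) auto
    with 2 show ?thesis unfolding t_def[symmetric] t by simp
  next
    case 3
    then have "(2::nat) ^ s \<le> 2 ^ c" by (intro power_increasing) auto
    with 3 show ?thesis by simp
  qed
qed

lemma neighborly_words_card_le:
  assumes "finite W" "neighborly_words (d - s) d W" "s \<le> d"
  shows "2 ^ (s + 1) * card W \<le> (2 ^ s + 1) * 2 ^ d"
proof -
  define t :: nat where "t = 2 ^ s - 1"
  let ?f = "\<lambda>w. card (vertices d w)"
  let ?A = "{u\<in>W. stars d u = {}}" and ?G = "{w\<in>W. card (stars d w) < s}"
  have "stars d w = {} \<longleftrightarrow> card (stars d w) = 0" for w
    by (simp add: stars_def)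
  then have charge: "2 * 2 ^ s \<le> t * ((if stars d w = {} then 1 else 0) +
      (if card (stars d w) < s then ?f w else 0)) + 2 * ?f w" for w
    using charging_bound[of s "card (stars d w)"] unfolding t_def card_vertices by presburger
  txt \<open>Adding \<open>2^s - 1\<close> times the antipode packing to twice the subcube packing charges
    every word at least \<open>2^(s+1)\<close>.\<close>
  have "2 ^ (s + 1) * card W = (\<Sum>w\<in>W. 2 * 2 ^ s)"
    by simp
  also have "\<dots> \<le> (\<Sum>w\<in>W. t * ((if stars d w = {} then 1 else 0) +
      (if card (stars d w) < s then ?f w else 0)) + 2 * ?f w)"
    by (intro sum_mono charge)
  also have "\<dots> = t * (card ?A + (\<Sum>w\<in>?G. ?f w)) + 2 * (\<Sum>w\<in>W. ?f w)"
    using assms(1)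
    by (simp add: sum.distrib sum.inter_filter flip: sum_distrib_left sum.inter_filter[of W "\<lambda>_. 1"])
  also have "\<dots> \<le> t * 2 ^ d + 2 * 2 ^ d"
    using card_no_stars_add_sum_card_vertices_le[OF assms] sum_card_vertices_le[OF assms(1,2)]
    by (intro add_mono mult_left_mono) simp_all
  also have "\<dots> = (2 ^ s + 1) * 2 ^ d"
    unfolding t_def by (simp add: algebra_simps)
  finally show ?thesis .
qed

lemma neighborly_words_mono:
  assumes "neighborly_words k d W" "k \<le> k'" "V \<subseteq> W"
  shows "neighborly_words k' d V"
  using assms unfolding neighborly_words_def by (meson le_trans subsetD)

lemma neighborly_words_UnI:
  assumes "neighborly_words k d A" "neighborly_words k d B"
    and "\<And>u v. u \<in> A \<Longrightarrow> v \<in> B \<Longrightarrow> opposite_positions d u v \<noteq> {} \<and> card (opposite_positions d u v) \<le> k"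
  shows "neighborly_words k d (A \<union> B)"
  unfolding neighborly_words_def
proof (intro ballI impI)
  fix u v assume "u \<in> A \<union> B" "v \<in> A \<union> B" "u \<noteq> v"
  with assms(1,2) assms(3)[of u v] assms(3)[of v u]
  show "opposite_positions d u v \<noteq> {} \<and> card (opposite_positions d u v) \<le> k"
    unfolding neighborly_words_def opposite_positions_commute[of d v u] by blast
qed

section \<open>From boxes to words and back\<close>

definition box_of_word :: "nat \<Rightarrow> (nat \<Rightarrow> bool option) \<Rightarrow> (nat \<Rightarrow> real) set" where
  "box_of_word d w = box_set d (\<lambda>i. if w i = Some True then 1 else 0) (\<lambda>i. if w i = Some False then 1 else 2)"

lemma is_box_box_of_word: "is_box d (box_of_word d w)"
  unfolding is_box_def box_of_word_def by (intro exI conjI allI impI refl) auto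

lemma neighborly_box_of_word_iff:
  assumes "0 < d" "k \<le> d"
  shows "neighborly k d (box_of_word d u) (box_of_word d v) \<longleftrightarrow>
    opposite_positions d u v \<noteq> {} \<and> card (opposite_positions d u v) \<le> k"
proof -
  have "{i. i < d \<and> ((if u i = Some False then 1 else 2) = (if v i = Some True then 1 else (0::real)) \<or>
      (if v i = Some False then 1 else 2) = (if u i = Some True then 1 else (0::real)))}
    = opposite_positions d u v"
    unfolding opposite_positions_def by (auto split: if_splits)
  then show ?thesis
    unfolding box_of_word_def using assms
    by (subst neighborly_box_set_iff) simp_all
qed

lemma box_of_word_neq:
  assumes "opposite_positions d u v \<noteq> {}"
  shows "box_of_word d u \<noteq> box_of_word d v"
proof
  assume eq: "box_of_word d u = box_of_word d v"
  obtain i b where "i < d" "u i = Some b" "v i = Some (\<not> b)"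
    using assms unfolding opposite_positions_def by auto
  with box_set_eqD[OF _ eq[unfolded box_of_word_def]] show False
    by (cases b) force+
qed

lemma neighborly_family_box_of_word:
  assumes "neighborly_words k d W" "0 < d" "k \<le> d"
  shows "neighborly_family k d (box_of_word d ` W)" "inj_on (box_of_word d) W"
proof -
  show "neighborly_family k d (box_of_word d ` W)"
    using assms is_box_box_of_word neighborly_box_of_word_iff[OF assms(2,3)]
    unfolding neighborly_family_def neighborly_words_def by auto
  show "inj_on (box_of_word d) W"
    using assms(1) box_of_word_neq unfolding neighborly_words_def inj_on_def by blast
qed

lemma common_contact_point:
  fixes lo hi :: "'a \<Rightarrow> 'b::linorder"
  assumes "\<And>B C. B \<in> F \<Longrightarrow> C \<in> F \<Longrightarrow> lo C \<le> hi B"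
  shows "\<exists>p. \<forall>B\<in>F. \<forall>C\<in>F. hi B = lo C \<longrightarrow> hi B = p"
proof (cases "\<exists>B\<in>F. \<exists>C\<in>F. hi B = lo C")
  case True
  then obtain B0 C0 where "B0 \<in> F" "C0 \<in> F" "hi B0 = lo C0" by blast
  with assms show ?thesis
    by (intro exI[of _ "hi B0"]) (metis order_antisym)
qed auto

definition contact_letter :: "'a \<Rightarrow> 'a \<Rightarrow> 'a \<Rightarrow> bool option" where
  "contact_letter p l h = (if h = p then Some False else if l = p then Some True else None)"

lemma contact_letters_opposite_iff:
  fixes p l h l' h' :: "'a::linorder"
  assumes "l < h" "l' < h'" "h = l' \<Longrightarrow> h = p" "h' = l \<Longrightarrow> h' = p"
  shows "(\<exists>b. contact_letter p l h = Some b \<and> contact_letter p l' h' = Some (\<not> b)) \<longleftrightarrow> h = l' \<or> h' = l"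
proof -
  have "(\<exists>b. contact_letter p l h = Some b \<and> contact_letter p l' h' = Some (\<not> b)) \<longleftrightarrow>
      (h = p \<and> l' = p) \<or> (l = p \<and> h' = p)"
    using assms(1,2) unfolding contact_letter_def by (auto simp: ex_bool_eq)
  also have "\<dots> \<longleftrightarrow> h = l' \<or> h' = l"
    using assms(3,4) by metis
  finally show ?thesis .
qed

text \<open>Pairwise intersecting boxes touch along an axis only at a common contact point, so a box
  reads as a word of contact letters.\<close>

lemma neighborly_family_obtains_words:
  assumes "neighborly_family k d F" "0 < d" "k \<le> d"
  obtains w where "inj_on w F" "neighborly_words k d (w ` F)"
proof -
  have "\<forall>B\<in>F. \<exists>a b. (\<forall>i<d. a i < b i) \<and> box_set d a b = B"
    using assms(1) unfolding neighborly_family_def is_box_def by metis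
  then obtain lo hi where lohi: "\<And>B i. B \<in> F \<Longrightarrow> i < d \<Longrightarrow> lo B i < hi B i"
    and box: "\<And>B. B \<in> F \<Longrightarrow> box_set d (lo B) (hi B) = B"
    by (metis bchoice)
  let ?touch = "\<lambda>B C. {i. i < d \<and> (hi B i = lo C i \<or> hi C i = lo B i)}"
  have neighborly_iff: "neighborly k d B C \<longleftrightarrow> (\<forall>i<d. lo C i \<le> hi B i \<and> lo B i \<le> hi C i) \<and>
      ?touch B C \<noteq> {} \<and> card (?touch B C) \<le> k" if "B \<in> F" "C \<in> F" for B C
    using neighborly_box_set_iff[of d "lo B" "hi B" "lo C" "hi C" k] lohi that assms(2,3)
    by (simp add: box)
  have "lo C i \<le> hi B i" if "B \<in> F" "C \<in> F" "i < d" for B C i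
    using assms(1) lohi[of B i] neighborly_iff[of B C] that
    unfolding neighborly_family_def by (cases "B = C") auto
  then have "\<exists>p. \<forall>B\<in>F. \<forall>C\<in>F. hi B i = lo C i \<longrightarrow> hi B i = p" if "i < d" for i
    using that by (intro common_contact_point) auto
  then obtain P where contact: "\<And>B C i. B \<in> F \<Longrightarrow> C \<in> F \<Longrightarrow> i < d \<Longrightarrow> hi B i = lo C i \<Longrightarrow> hi B i = P i"
    by metis
  define w where "w B i = contact_letter (P i) (lo B i) (hi B i)" for B i
  have "(\<exists>b. w B i = Some b \<and> w C i = Some (\<not> b)) \<longleftrightarrow> hi B i = lo C i \<or> hi C i = lo B i"
    if "B \<in> F" "C \<in> F" "i < d" for B C i
    unfolding w_def using lohi contact that by (intro contact_letters_opposite_iff) auto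
  then have opposite: "opposite_positions d (w B) (w C) = ?touch B C" if "B \<in> F" "C \<in> F" for B C
    using that unfolding opposite_positions_def by blast
  have distinct: "opposite_positions d (w B) (w C) \<noteq> {} \<and> card (opposite_positions d (w B) (w C)) \<le> k"
    if "B \<in> F" "C \<in> F" "B \<noteq> C" for B C
    using assms(1) neighborly_iff[OF that(1,2)] opposite[OF that(1,2)] that
    unfolding neighborly_family_def by simp
  then have "inj_on w F"
    by (metis inj_onI opposite_positions_self)
  moreover have "neighborly_words k d (w ` F)"
    using distinct unfolding neighborly_words_def by blast
  ultimately show thesis by (rule that)
qed

lemma finite_neighborly_family_cards:
  assumes "0 < d" "k \<le> d"
  shows "finite {card F | F. finite F \<and> neighborly_family k d F}"
proof (rule finite_subset)
  show "{card F | F. finite F \<and> neighborly_family k d F} \<subseteq> {..2 ^ d}"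
  proof
    fix n assume "n \<in> {card F | F. finite F \<and> neighborly_family k d F}"
    then obtain F where F: "n = card F" "finite F" "neighborly_family k d F" by blast
    obtain w where w: "inj_on w F" "neighborly_words k d (w ` F)"
      using neighborly_family_obtains_words[OF F(3) assms] .
    then have "card (w ` F) \<le> 2 ^ d"
      using F(2) by (intro neighborly_words_card_le_two_power) simp_all
    with card_image[OF w(1)] F(1) show "n \<in> {..2 ^ d}" by simp
  qed
qed simp

lemma nkd_attained:
  assumes "0 < d" "k \<le> d"
  obtains F where "finite F" "neighborly_family k d F" "card F = nkd k d"
proof -
  have "card {} \<in> {card F | F. finite F \<and> neighborly_family k d F}"
    unfolding mem_Collect_eq by (intro exI[of _ "{}"]) (simp add: neighborly_family_def)
  then have "{card F | F. finite F \<and> neighborly_family k d F} \<noteq> {}"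
    by (rule ex_in_conv[THEN iffD1, OF exI])
  then have "nkd k d \<in> {card F | F. finite F \<and> neighborly_family k d F}"
    unfolding nkd_def by (rule Max_in[OF finite_neighborly_family_cards[OF assms]])
  then obtain F where "nkd k d = card F \<and> finite F \<and> neighborly_family k d F"
    unfolding mem_Collect_eq ..
  then show thesis
    using that[of F] by simp
qed

lemma card_le_nkd:
  assumes "finite F" "neighborly_family k d F" "0 < d" "k \<le> d"
  shows "card F \<le> nkd k d"
proof -
  have "card F \<in> {card F | F. finite F \<and> neighborly_family k d F}"
    unfolding mem_Collect_eq using assms(1,2) by (intro exI[of _ F]) simp
  then show ?thesis
    unfolding nkd_def by (rule Max_ge[OF finite_neighborly_family_cards[OF assms(3,4)]])
qed

lemma nkd_upper_bound:
  assumes "s \<le> d" "0 < d"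
  shows "2 ^ (s + 1) * nkd (d - s) d \<le> (2 ^ s + 1) * 2 ^ d"
proof -
  obtain F where F: "finite F" "neighborly_family (d - s) d F" "card F = nkd (d - s) d"
    using nkd_attained[OF assms(2) diff_le_self] by blast
  obtain w where w: "inj_on w F" "neighborly_words (d - s) d (w ` F)"
    using neighborly_family_obtains_words[OF F(2) assms(2) diff_le_self] by blast
  have "card (w ` F) = nkd (d - s) d"
    using card_image[OF w(1)] F(3) by simp
  then show ?thesis
    using neighborly_words_card_le[OF _ w(2) assms(1)] F(1) by simp
qed

section \<open>The lower bound construction\<close>

definition star_word :: "nat set \<Rightarrow> nat set \<Rightarrow> nat \<Rightarrow> bool option" where
  "star_word S X i = (if i \<in> S then None else Some (i \<in> X))"

lemma opposite_positions_star_word: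
  "opposite_positions d (star_word S X) (star_word S' X') = {i. i < d \<and> i \<notin> S \<and> i \<notin> S' \<and> (i \<in> X \<longleftrightarrow> i \<notin> X')}"
  unfolding opposite_positions_def star_word_def by auto

definition extremal_words :: "nat \<Rightarrow> nat \<Rightarrow> (nat \<Rightarrow> bool option) set" where
  "extremal_words d s =
     star_word {} ` {X. X \<subseteq> {..<d} \<and> card X \<le> (d - s) div 2} \<union>
     star_word {..<s} ` {Y. Y \<subseteq> {s..<d} \<and> (d - s) div 2 < card Y}"

lemma neighborly_words_full_words:
  "neighborly_words (2 * m) d (star_word {} ` {X. X \<subseteq> {..<d} \<and> card X \<le> m})"
  unfolding neighborly_words_def ball_simps(9)
proof (intro ballI impI)
  fix X X' assume X: "X \<in> {X. X \<subseteq> {..<d} \<and> card X \<le> m}" "X' \<in> {X. X \<subseteq> {..<d} \<and> card X \<le> m}"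
    and "star_word {} X \<noteq> star_word {} X'"
  then have "X \<noteq> X'" by blast
  then obtain i where i: "i \<in> X \<longleftrightarrow> i \<notin> X'" by blast
  with X have "i < d" by blast
  with i have "opposite_positions d (star_word {} X) (star_word {} X') \<noteq> {}"
    unfolding opposite_positions_star_word by blast
  moreover have "card (opposite_positions d (star_word {} X) (star_word {} X')) \<le> card (X \<union> X')"
    using X by (intro card_mono) (auto simp: opposite_positions_star_word intro: finite_subset)
  moreover have "card (X \<union> X') \<le> 2 * m"
    using X card_Un_le[of X X'] by simp
  ultimately show "opposite_positions d (star_word {} X) (star_word {} X') \<noteq> {} \<and>
      card (opposite_positions d (star_word {} X) (star_word {} X')) \<le> 2 * m"
    by simp
qed

lemma card_opposite_positions_star_word_le:
  "card (opposite_positions d (star_word S X) (star_word {..<s} Y)) \<le> d - s"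
proof -
  have "opposite_positions d (star_word S X) (star_word {..<s} Y) \<subseteq> {s..<d}"
    unfolding opposite_positions_star_word by auto
  then have "card (opposite_positions d (star_word S X) (star_word {..<s} Y)) \<le> card {s..<d}"
    by (intro card_mono) simp_all
  then show ?thesis by simp
qed

lemma neighborly_words_starred_words: "neighborly_words (d - s) d (star_word {..<s} ` Pow {s..<d})"
  unfolding neighborly_words_def ball_simps(9)
proof (intro ballI impI conjI)
  fix Y Y' assume Y: "Y \<in> Pow {s..<d}" "Y' \<in> Pow {s..<d}" and "star_word {..<s} Y \<noteq> star_word {..<s} Y'"
  then have "Y \<noteq> Y'" by blast
  then obtain i where i: "i \<in> Y \<longleftrightarrow> i \<notin> Y'" by blast
  then have "i \<in> Y \<union> Y'" by blast
  with Y have "i \<in> {s..<d}" by blast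
  with i show "opposite_positions d (star_word {..<s} Y) (star_word {..<s} Y') \<noteq> {}"
    unfolding opposite_positions_star_word by auto
qed (rule card_opposite_positions_star_word_le)

lemma neighborly_extremal_words:
  assumes "s \<le> d"
  shows "neighborly_words (d - s) d (extremal_words d s)"
  unfolding extremal_words_def
proof (rule neighborly_words_UnI)
  show "neighborly_words (d - s) d (star_word {} ` {X. X \<subseteq> {..<d} \<and> card X \<le> (d - s) div 2})"
    by (rule neighborly_words_mono[OF neighborly_words_full_words]) auto
  show "neighborly_words (d - s) d (star_word {..<s} ` {Y. Y \<subseteq> {s..<d} \<and> (d - s) div 2 < card Y})"
    by (rule neighborly_words_mono[OF neighborly_words_starred_words]) auto
next
  fix u v assume "u \<in> star_word {} ` {X. X \<subseteq> {..<d} \<and> card X \<le> (d - s) div 2}"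
    "v \<in> star_word {..<s} ` {Y. Y \<subseteq> {s..<d} \<and> (d - s) div 2 < card Y}"
  then obtain X Y where X: "X \<subseteq> {..<d}" "card X \<le> (d - s) div 2" "u = star_word {} X"
    and Y: "Y \<subseteq> {s..<d}" "(d - s) div 2 < card Y" "v = star_word {..<s} Y"
    by blast
  have "\<not> Y \<subseteq> X"
    using X Y card_mono[of X Y] by (auto intro: finite_subset)
  then obtain i where "i \<in> Y" "i \<notin> X" by blast
  moreover have "i \<in> {s..<d}" using Y(1) \<open>i \<in> Y\<close> by blast
  ultimately have "opposite_positions d u v \<noteq> {}"
    unfolding X(3) Y(3) opposite_positions_star_word by auto
  then show "opposite_positions d u v \<noteq> {} \<and> card (opposite_positions d u v) \<le> d - s"
    unfolding X(3) Y(3) using card_opposite_positions_star_word_le by blast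
qed

lemma inj_on_star_word: "inj_on (star_word S) {X. X \<inter> S = {}}"
proof (rule inj_onI, rule set_eqI)
  fix X X' i assume "X \<in> {X. X \<inter> S = {}}" "X' \<in> {X. X \<inter> S = {}}" "star_word S X = star_word S X'"
  then show "i \<in> X \<longleftrightarrow> i \<in> X'"
    unfolding star_word_def by (cases "i \<in> S") (auto dest: fun_cong[of _ _ i])
qed

lemma card_extremal_words:
  assumes "1 \<le> s"
  shows "card (extremal_words d s) =
    card {X. X \<subseteq> {..<d} \<and> card X \<le> (d - s) div 2} + card {Y. Y \<subseteq> {s..<d} \<and> (d - s) div 2 < card Y}"
proof -
  have "inj_on (star_word {}) {X. X \<subseteq> {..<d} \<and> card X \<le> (d - s) div 2}"
    "inj_on (star_word {..<s}) {Y. Y \<subseteq> {s..<d} \<and> (d - s) div 2 < card Y}"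
    by (rule inj_on_subset[OF inj_on_star_word], force)+
  moreover have "star_word {} X 0 \<noteq> star_word {..<s} Y 0" for X Y
    using assms by (simp add: star_word_def)
  then have "star_word {} X \<noteq> star_word {..<s} Y" for X Y
    by metis
  ultimately show ?thesis
    unfolding extremal_words_def
    by (subst card_Un_disjoint) (auto simp: card_image intro: finite_subset[of _ "Pow {..<d}"])
qed

lemma finite_extremal_words: "finite (extremal_words d s)"
  unfolding extremal_words_def by (auto intro: finite_subset[of _ "Pow {..<d}"])

lemma nkd_lower_bound:
  assumes "1 \<le> s" "s \<le> d"
  shows "2 ^ d + 2 ^ (d - s) \<le> 2 * nkd (d - s) d + s * (d choose (d div 2)) + ((d - s) choose ((d - s) div 2))"
proof -
  define m where "m = (d - s) div 2"
  let ?L1 = "{X. X \<subseteq> {..<d} \<and> card X \<le> m}" and ?L2 = "{Y. Y \<subseteq> {s..<d} \<and> m < card Y}"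
  have "2 ^ d \<le> 2 * card ?L1 + (d - Suc (2 * m)) * (d choose (d div 2))"
    using two_power_le_card_subsets_le[of "{..<d}" m] by simp
  also have "\<dots> \<le> 2 * card ?L1 + s * (d choose (d div 2))"
    unfolding m_def by (intro add_left_mono mult_right_mono) auto
  finally have L1: "2 ^ d \<le> 2 * card ?L1 + s * (d choose (d div 2))" .
  have L2: "2 ^ (d - s) \<le> 2 * card ?L2 + ((d - s) choose m)"
    using two_power_le_card_subsets_gt[of "{s..<d}" m] unfolding m_def by simp
  have "0 < d" "d - s \<le> d" using assms by auto
  note boxes = neighborly_family_box_of_word[OF neighborly_extremal_words[OF assms(2)] this]
  have "card ?L1 + card ?L2 = card (box_of_word d ` extremal_words d s)"
    using card_extremal_words[OF assms(1)] card_image[OF boxes(2)] unfolding m_def by simp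
  also have "\<dots> \<le> nkd (d - s) d"
    using boxes(1) finite_extremal_words \<open>0 < d\<close> by (intro card_le_nkd) auto
  finally show ?thesis
    using L1 L2 unfolding m_def by linarith
qed

section \<open>Asymptotics\<close>

lemma tendsto_divide_of_two_sided_bound:
  fixes x f g :: "nat \<Rightarrow> real"
  assumes "eventually (\<lambda>n. c * g n - f n \<le> x n \<and> x n \<le> c * g n) sequentially"
    and "f \<in> o(g)" and "eventually (\<lambda>n. 0 < g n) sequentially"
  shows "(\<lambda>n. x n / g n) \<longlonglongrightarrow> c"
proof (rule tendsto_sandwich)
  show "eventually (\<lambda>n. c - f n / g n \<le> x n / g n) sequentially"
    "eventually (\<lambda>n. x n / g n \<le> c) sequentially"
    using eventually_conj[OF assms(1,3)] by (auto elim!: eventually_mono simp: field_simps)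
  show "(\<lambda>n. c - f n / g n) \<longlonglongrightarrow> c"
    using tendsto_diff[OF tendsto_const smalloD_tendsto[OF assms(2)], of c] by simp
qed simp

lemma nkd_lower_bound_real:
  assumes "1 \<le> s" "2 * s \<le> d"
  shows "(1/2 + 1 / 2 ^ (s + 1)) * 2 ^ d - real (s + 2) * 2 ^ d / sqrt (real d) \<le> real (nkd (d - s) d)"
proof -
  have "real (2 ^ d + 2 ^ (d - s)) \<le>
      real (2 * nkd (d - s) d + s * (d choose (d div 2)) + ((d - s) choose ((d - s) div 2)))"
    using nkd_lower_bound[OF assms(1)] assms(2) by (simp only: of_nat_le_iff)
  then have "2 ^ d + 2 ^ (d - s) \<le> 2 * real (nkd (d - s) d) +
      (real s * real (d choose (d div 2)) + real ((d - s) choose ((d - s) div 2)))"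
    by simp
  moreover have "(2::real) ^ d = 2 ^ (d - s) * 2 ^ s"
    using assms by (simp flip: power_add)
  then have "(1/2 + 1 / 2 ^ (s + 1)) * (2::real) ^ d = (2 ^ d + 2 ^ (d - s)) / 2"
    by (simp add: field_simps)
  moreover have "0 \<le> real (s + 2) * 2 ^ d / sqrt (real d)"
    by simp
  ultimately show ?thesis
    using central_binomial_terms_le[OF assms] by argo
qed

theorem theorem2:
  fixes s :: nat
  assumes "s \<ge> 1"
  shows "(\<forall>d. 2 * s \<le> d \<longrightarrow> real (nkd (d - s) d) \<le> (1/2 + 1 / 2 ^ (s + 1)) * 2 ^ d)
    \<and> (\<exists>f :: nat \<Rightarrow> real. f \<in> o(\<lambda>d. 2 ^ d) \<and>
         (\<forall>d. 2 * s \<le> d \<longrightarrow> (1/2 + 1 / 2 ^ (s + 1)) * 2 ^ d - f d \<le> real (nkd (d - s) d)))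
    \<and> (\<lambda>d. real (nkd (d - s) d) / 2 ^ d) \<longlonglongrightarrow> (2 ^ s + 1) / 2 ^ (s + 1)"
proof -
  define c :: real where "c = 1/2 + 1 / 2 ^ (s + 1)"
  define f :: "nat \<Rightarrow> real" where "f d = real (s + 2) * 2 ^ d / sqrt (real d)" for d
  have upper: "real (nkd (d - s) d) \<le> c * 2 ^ d" if "2 * s \<le> d" for d
  proof -
    have "real (2 ^ (s + 1) * nkd (d - s) d) \<le> real ((2 ^ s + 1) * 2 ^ d)"
      using nkd_upper_bound[of s d] that assms by (simp only: of_nat_le_iff)
    then show ?thesis unfolding c_def by (simp add: field_simps)
  qed
  have lower: "c * 2 ^ d - f d \<le> real (nkd (d - s) d)" if "2 * s \<le> d" for d
    using nkd_lower_bound_real[OF assms that] unfolding c_def f_def .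
  have "(\<lambda>d. real (s + 2) / sqrt (real d)) \<longlonglongrightarrow> 0"
    by (intro tendsto_divide_0[OF tendsto_const] filterlim_at_top_imp_at_infinity
        filterlim_compose[OF sqrt_at_top filterlim_real_sequentially])
  then have small: "f \<in> o(\<lambda>d. 2 ^ d)"
    unfolding f_def by (intro smalloI_tendsto) simp_all
  have "(\<lambda>d. real (nkd (d - s) d) / 2 ^ d) \<longlonglongrightarrow> c"
    using upper lower by (intro tendsto_divide_of_two_sided_bound[OF _ small])
      (auto simp: eventually_sequentially)
  moreover have "c = (2 ^ s + 1) / 2 ^ (s + 1)"
    unfolding c_def by (simp add: field_simps)
  ultimately show ?thesis
    unfolding c_def[symmetric] using upper lower small by auto
qed

end
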